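(* Let $W=V/\operatorname{Im}u$, $\zeta:V\to W$ the projection, $W_q=\zeta(\ker u^q)$ for $q\ge0$, and $P=\{g\in GL(W):g(W_q)=W_q\ \forall q\}$. Let $Z(u)=\{g\in GL(V):gu=ug\}$ and let $\varphi:Z(u)\to GL(W)$ be the morphism of algebraic groups sending $g$ to the induced map on $W$ (its image lies in $P$). Then there is a morphism of algebraic groups $\psi:P\to Z(u)$ such that $\varphi\circ\psi=\mathrm{id}_P$.
   Context: $V$ is a finite-dimensional complex vector space and $u:V\to V$ is nilpotent. *)

theory Defs
  imports "HOL-Analysis.Analysis"
begin

definition mpow :: "complex^'n^'n \<Rightarrow> nat \<Rightarrow> complex^'n^'n" where
  "mpow A q = (((**) A) ^^ q) (mat 1)"

definition nilpotent_mat :: "complex^'n^'n \<Rightarrow> bool" where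
  "nilpotent_mat A \<longleftrightarrow> (\<exists>k. mpow A k = 0)"

inductive_set polyfun :: "(complex^'m^'m \<Rightarrow> complex) set" where
  pf_const: "(\<lambda>g. c) \<in> polyfun"
| pf_coord: "(\<lambda>g. g $ i $ j) \<in> polyfun"
| pf_add: "p \<in> polyfun \<Longrightarrow> q \<in> polyfun \<Longrightarrow> (\<lambda>g. p g + q g) \<in> polyfun"
| pf_mult: "p \<in> polyfun \<Longrightarrow> q \<in> polyfun \<Longrightarrow> (\<lambda>g. p g * q g) \<in> polyfun"

text \<open>A map f from a subset S of GL_m to n x n matrices is regular (a morphism of
  varieties) if each entry is a regular function on GL_m, i.e. of the form
  p(g) / det(g)^k with p polynomial, restricted to S.\<close>
definition regular_on :: "(complex^'m^'m) set \<Rightarrow> (complex^'m^'m \<Rightarrow> complex^'n^'n) \<Rightarrow> bool" where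
  "regular_on S f \<longleftrightarrow> (\<forall>i j. \<exists>p\<in>polyfun. \<exists>k::nat. \<forall>g\<in>S. f g $ i $ j = p g / det g ^ k)"

definition alg_group_hom :: "(complex^'m^'m) set \<Rightarrow> (complex^'n^'n) set \<Rightarrow> (complex^'m^'m \<Rightarrow> complex^'n^'n) \<Rightarrow> bool" where
  "alg_group_hom S T f \<longleftrightarrow> (\<forall>g\<in>S. f g \<in> T) \<and> (\<forall>g\<in>S. \<forall>h\<in>S. f (g ** h) = f g ** f h)
     \<and> regular_on S f"

text \<open>W = V / Im u realised by a surjective linear map zeta : V -> W with kernel Im u.\<close>
definition is_quotient_by_image :: "complex^'n^'n \<Rightarrow> complex^'n^'m \<Rightarrow> bool" where
  "is_quotient_by_image u \<zeta> \<longleftrightarrow> range ((*v) \<zeta>) = UNIV \<and> {v. \<zeta> *v v = 0} = range ((*v) u)"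

definition Wq :: "complex^'n^'n \<Rightarrow> complex^'n^'m \<Rightarrow> nat \<Rightarrow> (complex^'m) set" where
  "Wq u \<zeta> q = (*v) \<zeta> ` {v. mpow u q *v v = 0}"

definition Pgrp :: "complex^'n^'n \<Rightarrow> complex^'n^'m \<Rightarrow> (complex^'m^'m) set" where
  "Pgrp u \<zeta> = {g. invertible g \<and> (\<forall>q. (*v) g ` Wq u \<zeta> q = Wq u \<zeta> q)}"

definition centralizer :: "complex^'n^'n \<Rightarrow> (complex^'n^'n) set" where
  "centralizer u = {g. invertible g \<and> g ** u = u ** g}"

definition induced_map :: "complex^'n^'m \<Rightarrow> complex^'n^'n \<Rightarrow> complex^'m^'m" where
  "induced_map \<zeta> g = (THE h. h ** \<zeta> = \<zeta> ** g)"

end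

theory Submission
  imports Defs
begin

(* Let K_q = ker u^q, so that W_q = \<zeta>(K_q).
   (1) Choose a linear section S : W \<rightarrow> V of \<zeta> which is compatible with the filtration,
       S(W_q) \<subseteq> K_q; it comes from a basis of W adapted to the chain W_0 \<subseteq> W_1 \<subseteq> ....
       Choose also T : V \<rightarrow> V with u T v = v - S \<zeta> v (possible because v - S \<zeta> v lies in
       ker \<zeta> = Im u).
   (2) Iterating v = S \<zeta> v + u T v gives, with N such that u^N = 0, the expansion
       v = \<Sum>_{l<N} u^l S a_l   with   a_l = \<zeta> T^l v,
       and such an expansion is unique up to changing a_l by elements of W_l.
   (3) Put \<psi>(g) v = \<Sum>_{l<N} u^l S g a_l.  Since g \<in> P preserves every W_l, applying g
       coefficientwise is compatible with the ambiguity in (2). *)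

lemma mpow_0 [simp]: "mpow A 0 = mat 1"
  by (simp add: mpow_def)

lemma mpow_Suc: "mpow A (Suc q) = A ** mpow A q"
  by (simp add: mpow_def)

lemma mpow_add: "mpow A (p + q) = mpow A p ** mpow A q"
  by (induction p) (simp_all add: mpow_Suc matrix_mul_assoc)

lemma mpow_Suc_apply: "mpow A (Suc q) *v x = A *v (mpow A q *v x)"
  by (simp add: mpow_Suc matrix_vector_mul_assoc)

lemma mpow_Suc_apply': "mpow A (Suc q) *v x = mpow A q *v (A *v x)"
  using mpow_add[of A q 1] by (simp add: mpow_Suc matrix_vector_mul_assoc)

lemma mpow_vanish_beyond:
  assumes "mpow A N = 0" and "N \<le> p"
  shows "mpow A p = 0"
proof -
  have "mpow A p = mpow A (p - N) ** mpow A N"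
    using assms(2) by (simp flip: mpow_add)
  then show ?thesis using assms(1) by simp
qed

lemma mpow_kernel_mono:
  assumes "p \<le> q" and "mpow A p *v v = 0"
  shows "mpow A q *v v = 0"
proof -
  have "mpow A q = mpow A (q - p) ** mpow A p"
    using assms(1) by (simp flip: mpow_add)
  then show ?thesis using assms(2) by (simp flip: matrix_vector_mul_assoc)
qed

lemma mpow_vanish_pos:
  fixes A :: "complex^'n^'n"
  assumes "mpow A N = 0"
  shows "0 < N"
proof (rule ccontr)
  assume "\<not> 0 < N"
  then have "mat 1 = (0 :: complex^'n^'n)" using assms by simp
  then have "(mat 1 :: complex^'n^'n) $ i $ i = 0" for i by simp
  then show False by (simp add: mat_def)
qed

lemma sum_matrix_vector: "(sum M S) *v (v::'a::semiring_1^'n) = (\<Sum>l\<in>S. M l *v v)"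
  by (induct S rule: infinite_finite_induct) (simp_all add: matrix_vector_mult_add_rdistrib)

lemma polyfun_sum:
  "finite A \<Longrightarrow> (\<And>x. x \<in> A \<Longrightarrow> f x \<in> polyfun) \<Longrightarrow> (\<lambda>g. \<Sum>x\<in>A. f x g) \<in> polyfun"
proof (induction A rule: finite_induct)
  case empty
  then show ?case using pf_const[of 0] by simp
next
  case (insert x F)
  then show ?case using pf_add[of "f x" "\<lambda>g. \<Sum>x\<in>F. f x g"] by simp
qed

subsection \<open>Lifting along a filtration\<close>

lemma adapted_basis:
  fixes G :: "nat \<Rightarrow> (complex^'a) set"
  assumes mono: "\<And>p q. p \<le> q \<Longrightarrow> G p \<subseteq> G q"
    and stable: "\<And>p. N \<le> p \<Longrightarrow> G p = G N"
  shows "\<exists>B. vec.independent B \<and> B \<subseteq> G N \<and> (\<forall>p. G p \<subseteq> vec.span (B \<inter> G p))"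
proof -
  have "\<exists>B. vec.independent B \<and> B \<subseteq> G q \<and> (\<forall>p\<le>q. G p \<subseteq> vec.span (B \<inter> G p))" for q
  proof (induction q)
    case 0
    obtain B where "B \<subseteq> G 0" "vec.independent B" "G 0 \<subseteq> vec.span B"
      using vec.maximal_independent_subset_extend[of "{}" "G 0"] vec.independent_empty by auto
    then show ?case by (intro exI[of _ B]) (auto simp: Int_absorb2)
  next
    case (Suc q)
    then obtain B where B: "vec.independent B" "B \<subseteq> G q" "\<forall>p\<le>q. G p \<subseteq> vec.span (B \<inter> G p)"
      by blast
    have "B \<subseteq> G (Suc q)" using B(2) mono[of q "Suc q"] by auto
    then obtain B' where B': "B \<subseteq> B'" "B' \<subseteq> G (Suc q)" "vec.independent B'" "G (Suc q) \<subseteq> vec.span B'"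
      using vec.maximal_independent_subset_extend[of B "G (Suc q)"] B(1) by auto
    have "G p \<subseteq> vec.span (B' \<inter> G p)" if "p \<le> Suc q" for p
    proof (cases "p = Suc q")
      case True
      then show ?thesis using B' by (simp add: Int_absorb2)
    next
      case False
      then have "G p \<subseteq> vec.span (B \<inter> G p)" using B(3) that by simp
      also have "\<dots> \<subseteq> vec.span (B' \<inter> G p)" using B'(1) by (intro vec.span_mono) blast
      finally show ?thesis .
    qed
    then show ?case using B' by blast
  qed
  then obtain B where B: "vec.independent B" "B \<subseteq> G N" "\<forall>p\<le>N. G p \<subseteq> vec.span (B \<inter> G p)"
    by blast
  have "G p \<subseteq> vec.span (B \<inter> G p)" for p
    using B(3) stable[of p] by (cases "p \<le> N") auto
  then show ?thesis using B(1,2) by blast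
qed

text \<open>Applied to
  F_q = ker u^q and A = \<zeta> it gives the filtered section of the quotient map.\<close>
lemma filtered_lift:
  fixes A :: "complex^'a^'b" and F :: "nat \<Rightarrow> (complex^'a) set"
  assumes sub: "\<And>q. vec.subspace (F q)"
    and mono: "\<And>p q. p \<le> q \<Longrightarrow> F p \<subseteq> F q"
    and stable: "\<And>p. N \<le> p \<Longrightarrow> (*v) A ` F p = (*v) A ` F N"
  shows "\<exists>S :: complex^'b^'a. \<forall>q. \<forall>y \<in> (*v) A ` F q. A *v (S *v y) = y \<and> S *v y \<in> F q"
proof -
  define G where "G q = (*v) A ` F q" for q
  obtain B where B: "vec.independent B" "B \<subseteq> G N" "\<And>p. G p \<subseteq> vec.span (B \<inter> G p)"
    using adapted_basis[of G N] mono stable unfolding G_def by (metis image_mono)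
  text \<open>Each basis vector b is lifted into the first filtration step whose image contains it.\<close>
  define level where "level b = (LEAST p. b \<in> G p)" for b
  define lift where "lift b = (SOME v. v \<in> F (level b) \<and> A *v v = b)" for b
  have lift: "lift b \<in> F (level b) \<and> A *v lift b = b" if "b \<in> B" for b
  proof -
    have "b \<in> G (level b)" unfolding level_def using that B(2) by (intro LeastI) auto
    then have "\<exists>v. v \<in> F (level b) \<and> A *v v = b" unfolding G_def by auto
    then show ?thesis unfolding lift_def by (rule someI_ex)
  qed
  obtain h where h: "Vector_Spaces.linear (*s) (*s) h" "\<And>b. b \<in> B \<Longrightarrow> h b = lift b"
    using vec.linear_independent_extend[OF B(1)] by blast
  define S where "S = matrix h"
  have S: "S *v x = h x" for x unfolding S_def by (rule matrix_works[OF h(1)])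
  have "A *v (S *v y) = y \<and> S *v y \<in> F q" if y: "y \<in> G q" for q y
  proof
    have span: "y \<in> vec.span (B \<inter> G q)" using B(3) y by blast
    have "(A ** S) *v y = id y"
    proof (rule vec.linear_eq_on[OF _ _ span])
      fix b assume "b \<in> B \<inter> G q"
      then show "(A ** S) *v b = id b" using lift h(2) S by (simp flip: matrix_vector_mul_assoc)
    qed (auto intro: vec.linear_id[unfolded id_def])
    then show "A *v (S *v y) = y" by (simp add: matrix_vector_mul_assoc)
    have "(*v) S ` (B \<inter> G q) \<subseteq> F q"
    proof
      fix x assume "x \<in> (*v) S ` (B \<inter> G q)"
      then obtain b where b: "b \<in> B" "b \<in> G q" "x = S *v b" by auto
      have "level b \<le> q" unfolding level_def using b by (intro Least_le)
      then show "x \<in> F q" using mono lift[OF b(1)] b h(2) S by auto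
    qed
    then have "vec.span ((*v) S ` (B \<inter> G q)) \<subseteq> F q" using sub by (intro vec.span_minimal)
    then show "S *v y \<in> F q" using span vec.span_image[of S "B \<inter> G q"] by auto
  qed
  then show ?thesis unfolding G_def by blast
qed

lemma right_inverse_on_range:
  fixes A :: "complex^'a^'b"
  shows "\<exists>R :: complex^'b^'a. \<forall>y \<in> range ((*v) A). A *v (R *v y) = y"
  using filtered_lift[where F="\<lambda>_. UNIV" and N=0 and A=A] by (simp add: vec.subspace_UNIV)

subsection \<open>Expansions along a filtered section\<close>

locale filtered_splitting =
  fixes u :: "complex^'n^'n" and \<zeta> :: "complex^'n^'m" and N :: nat
    and S :: "complex^'m^'n" and T :: "complex^'n^'n"
  assumes nilpotent: "mpow u N = 0"
    and kills_image: "\<zeta> *v (u *v v) = 0"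
    and is_section: "\<zeta> *v (S *v y) = y"
    and section_filtered: "y \<in> Wq u \<zeta> q \<Longrightarrow> mpow u q *v (S *v y) = 0"
    and homotopy: "u *v (T *v v) = v - S *v (\<zeta> *v v)"
begin

definition assemble :: "(nat \<Rightarrow> complex^'m) \<Rightarrow> nat \<Rightarrow> complex^'n" where
  "assemble a k = (\<Sum>l<k. mpow u l *v (S *v a l))"

definition coeff :: "nat \<Rightarrow> complex^'n \<Rightarrow> complex^'m" where
  "coeff l v = \<zeta> *v (mpow T l *v v)"

lemma assemble_Suc: "assemble a (Suc k) = assemble a k + mpow u k *v (S *v a k)"
  by (simp add: assemble_def)

lemma assemble_shift: "assemble a (Suc k) = S *v a 0 + u *v assemble (\<lambda>l. a (Suc l)) k"
  unfolding assemble_def sum.lessThan_Suc_shift by (simp add: mpow_Suc_apply vec.sum)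

lemma assemble_diff: "assemble (\<lambda>l. a l - b l) k = assemble a k - assemble b k"
  by (simp add: assemble_def matrix_vector_mult_diff_distrib sum_subtractf)

lemma assemble_stable: "N \<le> k \<Longrightarrow> assemble a (Suc k) = assemble a k"
  using mpow_vanish_beyond[OF nilpotent] by (simp add: assemble_Suc)

lemma \<zeta>_assemble: "0 < k \<Longrightarrow> \<zeta> *v assemble a k = a 0"
  by (cases k) (simp_all add: assemble_shift matrix_vector_right_distrib is_section kills_image)

text \<open>Every vector is assembled from its canonical coefficients: iterate v = S \<zeta> v + u T v.\<close>
lemma expansion_step: "v = assemble (\<lambda>l. coeff l v) k + mpow u k *v (mpow T k *v v)"
proof (induction k)
  case 0
  then show ?case by (simp add: assemble_def)
next
  case (Suc k)
  define x where "x = mpow T k *v v"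
  have "mpow u k *v x = mpow u k *v (S *v (\<zeta> *v x)) + mpow u k *v (u *v (T *v x))"
    by (simp add: homotopy flip: matrix_vector_right_distrib)
  also have "\<dots> = mpow u k *v (S *v coeff k v) + mpow u (Suc k) *v (mpow T (Suc k) *v v)"
    unfolding x_def coeff_def mpow_Suc_apply[of T] mpow_Suc_apply'[of u] by simp
  finally show ?case using Suc unfolding x_def by (simp add: assemble_Suc add.assoc)
qed

lemma expansion: "v = assemble (\<lambda>l. coeff l v) N"
  using expansion_step[of v N] nilpotent by simp

text \<open>Uniqueness of expansions: if u^q kills \<Sum>_{l<k} u^l S a_l then each a_l lies in W_{l+q}.
  The coefficient a_0 is read off by \<zeta>; the remaining terms are handled by induction.\<close>
lemma assemble_kernel:
  "mpow u q *v assemble a k = 0 \<Longrightarrow> l < k \<Longrightarrow> a l \<in> Wq u \<zeta> (l + q)"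
proof (induction k arbitrary: q a l)
  case 0
  then show ?case by simp
next
  case (Suc k)
  define y where "y = assemble (\<lambda>l. a (Suc l)) k"
  have shift: "assemble a (Suc k) = S *v a 0 + u *v y"
    unfolding y_def by (rule assemble_shift)
  have a0: "a 0 \<in> Wq u \<zeta> q"
    using Suc.prems(1) \<zeta>_assemble[of "Suc k" a] unfolding Wq_def by force
  have "mpow u (Suc q) *v y = mpow u q *v assemble a (Suc k) - mpow u q *v (S *v a 0)"
    by (simp add: shift mpow_Suc_apply' matrix_vector_right_distrib)
  then have "mpow u (Suc q) *v y = 0"
    using Suc.prems(1) section_filtered[OF a0] by simp
  then show ?case
    using Suc.IH[of "Suc q" "\<lambda>i. a (Suc i)"] Suc.prems(2) a0 unfolding y_def
    by (cases l) auto
qed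

lemma assemble_transport:
  assumes g: "\<And>q. (*v) g ` Wq u \<zeta> q \<subseteq> Wq u \<zeta> q"
    and eq: "assemble a k = assemble b k"
  shows "assemble (\<lambda>l. g *v a l) k = assemble (\<lambda>l. g *v b l) k"
proof -
  have "a l - b l \<in> Wq u \<zeta> l" if "l < k" for l
    using assemble_kernel[of 0 "\<lambda>l. a l - b l" k l] that eq by (simp add: assemble_diff)
  then have "g *v (a l - b l) \<in> Wq u \<zeta> l" if "l < k" for l
    using g that by blast
  then have "assemble (\<lambda>l. g *v (a l - b l)) k = 0"
    unfolding assemble_def using section_filtered by (intro sum.neutral) blast
  then show ?thesis by (simp add: matrix_vector_mult_diff_distrib assemble_diff)
qed

end

subsection \<open>The splitting homomorphism\<close>

context filtered_splitting
begin

definition psi :: "complex^'m^'m \<Rightarrow> complex^'n^'n" where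
  "psi g = (\<Sum>l<N. mpow u l ** S ** g ** (\<zeta> ** mpow T l))"

lemma psi_apply: "psi g *v v = assemble (\<lambda>l. g *v coeff l v) N"
  by (simp add: psi_def assemble_def coeff_def sum_matrix_vector matrix_vector_mul_assoc matrix_mul_assoc)

lemma psi_one: "psi (mat 1) = mat 1"
  using expansion by (simp add: matrix_eq psi_apply)

lemma psi_mult:
  assumes g: "\<And>q. (*v) g ` Wq u \<zeta> q \<subseteq> Wq u \<zeta> q"
  shows "psi g ** psi h = psi (g ** h)"
proof -
  have "psi g *v (psi h *v v) = psi (g ** h) *v v" for v
  proof -
    define x where "x = psi h *v v"
    have "assemble (\<lambda>l. coeff l x) N = assemble (\<lambda>l. h *v coeff l v) N"
      using expansion[of x] psi_apply[of h v] unfolding x_def by simp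
    then have "assemble (\<lambda>l. g *v coeff l x) N = assemble (\<lambda>l. g *v (h *v coeff l v)) N"
      by (rule assemble_transport[OF g])
    then show ?thesis unfolding x_def by (simp only: psi_apply matrix_vector_mul_assoc)
  qed
  then show ?thesis by (simp add: matrix_eq matrix_vector_mul_assoc)
qed

text \<open>Commutation with u: u v has the expansion with coefficients shifted by one place,
  and the transport lemma compares it with the canonical one.\<close>
lemma psi_commutes:
  assumes g: "\<And>q. (*v) g ` Wq u \<zeta> q \<subseteq> Wq u \<zeta> q"
  shows "psi g ** u = u ** psi g"
proof -
  have "psi g *v (u *v v) = u *v (psi g *v v)" for v
  proof -
    define b where "b = case_nat 0 (\<lambda>l. coeff l v)"
    have "assemble (\<lambda>l. coeff l (u *v v)) (Suc N) = u *v v"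
      by (simp add: assemble_stable flip: expansion)
    moreover have "assemble b (Suc N) = u *v v"
      by (simp add: assemble_shift b_def flip: expansion)
    ultimately have "assemble (\<lambda>l. g *v coeff l (u *v v)) (Suc N) = assemble (\<lambda>l. g *v b l) (Suc N)"
      by (intro assemble_transport[OF g]) simp
    moreover have "assemble (\<lambda>l. g *v coeff l (u *v v)) (Suc N) = psi g *v (u *v v)"
      by (simp add: assemble_stable psi_apply)
    moreover have "assemble (\<lambda>l. g *v b l) (Suc N) = u *v (psi g *v v)"
      by (simp add: assemble_shift psi_apply b_def)
    ultimately show ?thesis by simp
  qed
  then show ?thesis by (simp add: matrix_eq matrix_vector_mul_assoc)
qed

text \<open>\<psi>(g) induces g on W, since \<zeta> reads off the 0-th coefficient \<zeta> v.\<close>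
lemma psi_induces: "\<zeta> ** psi g = g ** \<zeta>"
proof -
  have "\<zeta> *v (psi g *v v) = g *v (\<zeta> *v v)" for v
    using mpow_vanish_pos[OF nilpotent] by (simp add: psi_apply \<zeta>_assemble coeff_def)
  then show ?thesis by (simp add: matrix_eq flip: matrix_vector_mul_assoc)
qed

lemma induced_map_psi: "induced_map \<zeta> (psi g) = g"
  unfolding induced_map_def
proof (rule the_equality)
  show "g ** \<zeta> = \<zeta> ** psi g" by (simp add: psi_induces)
next
  have \<zeta>S: "\<zeta> ** S = mat 1" by (simp add: matrix_eq is_section flip: matrix_vector_mul_assoc)
  fix h assume "h ** \<zeta> = \<zeta> ** psi g"
  then have "h ** \<zeta> ** S = g ** \<zeta> ** S" by (simp add: psi_induces)
  then show "h = g" by (simp add: \<zeta>S flip: matrix_mul_assoc)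
qed

lemma psi_regular: "regular_on X psi"
  unfolding regular_on_def
proof (intro allI)
  fix i j
  define p where "p = (\<lambda>g::complex^'m^'m. \<Sum>l<N. \<Sum>k\<in>UNIV.
      (\<Sum>a\<in>UNIV. (mpow u l ** S) $ i $ a * g $ a $ k) * (\<zeta> ** mpow T l) $ k $ j)"
  have "p \<in> polyfun" unfolding p_def
    by (intro polyfun_sum pf_mult pf_const pf_coord finite_lessThan) simp_all
  moreover have "psi g $ i $ j = p g / det g ^ 0" for g
    by (simp add: psi_def p_def matrix_matrix_mult_def)
  ultimately show "\<exists>p\<in>polyfun. \<exists>k::nat. \<forall>g\<in>X. psi g $ i $ j = p g / det g ^ k" by blast
qed

text \<open>On P the map \<psi> is a morphism of algebraic groups into Z(u); invertibility of \<psi>(g)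
  follows from \<psi>(g) \<psi>(g') = \<psi>(g g') = 1 for an inverse g' of g.\<close>
lemma psi_alg_group_hom: "alg_group_hom (Pgrp u \<zeta>) (centralizer u) psi"
proof -
  have preserves: "(*v) g ` Wq u \<zeta> q \<subseteq> Wq u \<zeta> q" if "g \<in> Pgrp u \<zeta>" for g q
    using that unfolding Pgrp_def by auto
  have "psi g \<in> centralizer u" if g: "g \<in> Pgrp u \<zeta>" for g
  proof -
    obtain g' where "g ** g' = mat 1" using g unfolding Pgrp_def invertible_def by blast
    then have "psi g ** psi g' = mat 1" using psi_mult[OF preserves[OF g]] psi_one by simp
    then have "invertible (psi g)" using invertible_right_inverse by blast
    then show ?thesis using psi_commutes[OF preserves[OF g]] unfolding centralizer_def by simp
  qed
  then show ?thesis
    unfolding alg_group_hom_def using psi_mult[OF preserves] psi_regular by simp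
qed

end

text \<open>For nilpotent u and W = V / Im u, the data of the locale exist: S by lifting along the
  kernel filtration of u, and T by composing 1 - S \<zeta> (which lands in ker \<zeta> = Im u) with a
  right inverse of u on its range.\<close>
lemma filtered_splitting_exists:
  fixes u :: "complex^'n^'n" and \<zeta> :: "complex^'n^'m"
  assumes nil: "mpow u N = 0" and quot: "is_quotient_by_image u \<zeta>"
  shows "\<exists>S T. filtered_splitting u \<zeta> N S T"
proof -
  have surj: "range ((*v) \<zeta>) = UNIV" and ker: "{v. \<zeta> *v v = 0} = range ((*v) u)"
    using quot unfolding is_quotient_by_image_def by auto
  define K where "K q = {v. mpow u q *v v = 0}" for q
  have K_full: "K p = UNIV" if "N \<le> p" for p
    unfolding K_def using mpow_vanish_beyond[OF nil that] by simp
  have "\<exists>S :: complex^'m^'n. \<forall>q. \<forall>y \<in> (*v) \<zeta> ` K q. \<zeta> *v (S *v y) = y \<and> S *v y \<in> K q"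
    by (rule filtered_lift[where N=N])
      (use K_full in \<open>auto simp: K_def vec.subspace_kernel intro: mpow_kernel_mono\<close>)
  then obtain S :: "complex^'m^'n"
    where S: "\<And>q y. y \<in> (*v) \<zeta> ` K q \<Longrightarrow> \<zeta> *v (S *v y) = y \<and> S *v y \<in> K q"
    by blast
  have is_section: "\<zeta> *v (S *v y) = y" for y
    using S[of y N] K_full[of N] surj by auto
  obtain R :: "complex^'n^'n" where R: "\<And>y. y \<in> range ((*v) u) \<Longrightarrow> u *v (R *v y) = y"
    using right_inverse_on_range[of u] by blast
  define T where "T = R ** (mat 1 - S ** \<zeta>)"
  have "u *v (T *v v) = v - S *v (\<zeta> *v v)" for v
  proof -
    have "v - S *v (\<zeta> *v v) \<in> range ((*v) u)"
      using ker is_section by (auto simp: matrix_vector_mult_diff_distrib)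
    then show ?thesis
      using R by (simp add: T_def matrix_vector_mult_diff_rdistrib flip: matrix_vector_mul_assoc)
  qed
  moreover have "\<zeta> *v (u *v v) = 0" for v using ker by auto
  moreover have "mpow u q *v (S *v y) = 0" if "y \<in> Wq u \<zeta> q" for q y
    using S that unfolding Wq_def K_def by blast
  ultimately have "filtered_splitting u \<zeta> N S T"
    using nil is_section by unfold_locales
  then show ?thesis by blast
qed

theorem lemma3p6:
  fixes u :: "complex^'n^'n" and \<zeta> :: "complex^'n^'m"
  assumes "nilpotent_mat u"
    and "is_quotient_by_image u \<zeta>"
  shows "\<exists>\<psi>. alg_group_hom (Pgrp u \<zeta>) (centralizer u) \<psi>
           \<and> (\<forall>g\<in>Pgrp u \<zeta>. induced_map \<zeta> (\<psi> g) = g)"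
proof -
  obtain N where "mpow u N = 0"
    using assms(1) unfolding nilpotent_mat_def by blast
  then obtain S T where "filtered_splitting u \<zeta> N S T"
    using filtered_splitting_exists assms(2) by blast
  then interpret filtered_splitting u \<zeta> N S T .
  show ?thesis using psi_alg_group_hom induced_map_psi by blast
qed

end
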